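(* Let $M$ be a finite $\Sigma$-Rickart right $R$-module. Then: (i) for all integers $m,n>0$, $M^{(m)}$ is $M^{(n)}$-Rickart; (ii) for every $K\in\mathrm{add}(M)$, the intersection of two finitely $M$-generated submodules of $K$ is finitely $M$-generated; (iii) the intersection of two finitely $M$-generated submodules of $M$ is finitely $M$-generated.
   Context: Modules are unitary right $R$-modules; $M^{(n)}$ is the direct sum of $n$ copies of $M$. $M$ is Rickart if $\ker\varphi$ is a direct summand of $M$ for all $\varphi\in\mathrm{End}_R(M)$; $M$ is finite $\Sigma$-Rickart if $M^{(n)}$ is Rickart for all $n>0$. A module $A$ is $N$-Rickart if $\ker\rho$ is a direct summand of $A$ for every $\rho\in\mathrm{Hom}_R(A,N)$. $\mathrm{add}(M)$ is the class of modules isomorphic to a direct summand of $M^{(n)}$ for some integer $n>0$. A module $N$ is finitely $M$-generated if there is an epimorphism $M^{(n)}\to N$ for some integer $n>0$. *)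

theory Defs
  imports Main
begin

record ('m, 'r) rmod =
  carrier :: "'m set"
  add :: "'m \<Rightarrow> 'm \<Rightarrow> 'm"
  zero :: 'm
  smul :: "'m \<Rightarrow> 'r \<Rightarrow> 'm"

definition rmodule :: "('m, 'r::ring_1) rmod \<Rightarrow> bool" where
  "rmodule M \<longleftrightarrow>
     zero M \<in> carrier M \<and>
     (\<forall>x\<in>carrier M. \<forall>y\<in>carrier M. add M x y \<in> carrier M) \<and>
     (\<forall>x\<in>carrier M. \<forall>r. smul M x r \<in> carrier M) \<and>
     (\<forall>x\<in>carrier M. \<forall>y\<in>carrier M. \<forall>z\<in>carrier M. add M (add M x y) z = add M x (add M y z)) \<and>
     (\<forall>x\<in>carrier M. \<forall>y\<in>carrier M. add M x y = add M y x) \<and>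
     (\<forall>x\<in>carrier M. add M (zero M) x = x) \<and>
     (\<forall>x\<in>carrier M. \<exists>y\<in>carrier M. add M x y = zero M) \<and>
     (\<forall>x\<in>carrier M. \<forall>y\<in>carrier M. \<forall>r. smul M (add M x y) r = add M (smul M x r) (smul M y r)) \<and>
     (\<forall>x\<in>carrier M. \<forall>r s. smul M x (r + s) = add M (smul M x r) (smul M x s)) \<and>
     (\<forall>x\<in>carrier M. \<forall>r s. smul M x (r * s) = smul M (smul M x r) s) \<and>
     (\<forall>x\<in>carrier M. smul M x 1 = x)"

definition submodule :: "('m, 'r) rmod \<Rightarrow> 'm set \<Rightarrow> bool" where
  "submodule M S \<longleftrightarrow> S \<subseteq> carrier M \<and> zero M \<in> S \<and>
     (\<forall>x\<in>S. \<forall>y\<in>S. add M x y \<in> S) \<and> (\<forall>x\<in>S. \<forall>r. smul M x r \<in> S)"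

definition subm :: "('m, 'r) rmod \<Rightarrow> 'm set \<Rightarrow> ('m, 'r) rmod" where
  "subm M S = M\<lparr>carrier := S\<rparr>"

definition direct_summand :: "('m, 'r) rmod \<Rightarrow> 'm set \<Rightarrow> bool" where
  "direct_summand M S \<longleftrightarrow> submodule M S \<and>
     (\<exists>T. submodule M T \<and> S \<inter> T = {zero M} \<and>
          (\<forall>x\<in>carrier M. \<exists>s\<in>S. \<exists>t\<in>T. x = add M s t))"

definition hom :: "('m, 'r) rmod \<Rightarrow> ('n, 'r) rmod \<Rightarrow> ('m \<Rightarrow> 'n) set" where
  "hom M N = {f. (\<forall>x\<in>carrier M. f x \<in> carrier N) \<and>
     (\<forall>x\<in>carrier M. \<forall>y\<in>carrier M. f (add M x y) = add N (f x) (f y)) \<and>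
     (\<forall>x\<in>carrier M. \<forall>r. f (smul M x r) = smul N (f x) r)}"

definition kernel :: "('m, 'r) rmod \<Rightarrow> ('n, 'r) rmod \<Rightarrow> ('m \<Rightarrow> 'n) \<Rightarrow> 'm set" where
  "kernel M N f = {x\<in>carrier M. f x = zero N}"

text \<open>The direct sum M^(n) of n copies of M, realised as functions on nat supported in {0..<n}.\<close>
definition dpow :: "('m, 'r) rmod \<Rightarrow> nat \<Rightarrow> (nat \<Rightarrow> 'm, 'r) rmod" where
  "dpow M n = \<lparr>carrier = {f. (\<forall>i<n. f i \<in> carrier M) \<and> (\<forall>i\<ge>n. f i = zero M)},
               add = (\<lambda>f g i. add M (f i) (g i)),
               zero = (\<lambda>i. zero M),
               smul = (\<lambda>f r i. if i < n then smul M (f i) r else zero M)\<rparr>"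

definition rickart :: "('m, 'r) rmod \<Rightarrow> bool" where
  "rickart M \<longleftrightarrow> (\<forall>\<phi>\<in>hom M M. direct_summand M (kernel M M \<phi>))"

definition finite_sigma_rickart :: "('m, 'r) rmod \<Rightarrow> bool" where
  "finite_sigma_rickart M \<longleftrightarrow> (\<forall>n>0. rickart (dpow M n))"

text \<open>A is N-Rickart.\<close>
definition rel_rickart :: "('m, 'r) rmod \<Rightarrow> ('n, 'r) rmod \<Rightarrow> bool" where
  "rel_rickart A N \<longleftrightarrow> (\<forall>\<rho>\<in>hom A N. direct_summand A (kernel A N \<rho>))"

definition isomorphic :: "('m, 'r) rmod \<Rightarrow> ('n, 'r) rmod \<Rightarrow> bool" where
  "isomorphic M N \<longleftrightarrow> (\<exists>f\<in>hom M N. bij_betw f (carrier M) (carrier N))"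

definition in_add :: "('m, 'r) rmod \<Rightarrow> ('k, 'r) rmod \<Rightarrow> bool" where
  "in_add M K \<longleftrightarrow> (\<exists>n>0. \<exists>S. direct_summand (dpow M n) S \<and> isomorphic K (subm (dpow M n) S))"

definition fin_gen :: "('m, 'r) rmod \<Rightarrow> ('n, 'r) rmod \<Rightarrow> bool" where
  "fin_gen M N \<longleftrightarrow> (\<exists>n>0. \<exists>f\<in>hom (dpow M n) N. f ` carrier (dpow M n) = carrier N)"

end

theory Submission
  imports Defs
begin

text \<open>
  (i) A map rho from M^(m) to M^(n) becomes an endomorphism of M^(m+n) by keeping the first m
  coordinates and shifting the values into the last n coordinates. Its kernel is the preimage
  of ker rho under the coordinate projection, which is a retraction, so ker rho is a direct
  summand because the kernel upstairs is.

  (ii) If A and B are the images of alpha on M^(a) and beta on M^(b), then A \<inter> B is the image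
  under (u, v) \<mapsto> alpha u of the kernel of (u, v) \<mapsto> alpha u - beta v on M^(a+b). As K embeds
  into some M^(k), M^(a+b) is K-Rickart by (i), so this kernel is a direct summand and the
  projection onto it exhibits A \<inter> B as an epimorphic image of M^(a+b). (iii) is the case K = M.
\<close>

subsection \<open>Module arithmetic\<close>

lemma rmodule_zero_closed: "rmodule M \<Longrightarrow> zero M \<in> carrier M"
  unfolding rmodule_def by meson

lemma rmodule_add_closed:
  "rmodule M \<Longrightarrow> x \<in> carrier M \<Longrightarrow> y \<in> carrier M \<Longrightarrow> add M x y \<in> carrier M"
  unfolding rmodule_def by meson

lemma rmodule_smul_closed: "rmodule M \<Longrightarrow> x \<in> carrier M \<Longrightarrow> smul M x r \<in> carrier M"
  unfolding rmodule_def by meson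

lemma rmodule_add_assoc:
  "rmodule M \<Longrightarrow> x \<in> carrier M \<Longrightarrow> y \<in> carrier M \<Longrightarrow> z \<in> carrier M \<Longrightarrow>
    add M (add M x y) z = add M x (add M y z)"
  unfolding rmodule_def by meson

lemma rmodule_add_commute:
  "rmodule M \<Longrightarrow> x \<in> carrier M \<Longrightarrow> y \<in> carrier M \<Longrightarrow> add M x y = add M y x"
  unfolding rmodule_def by meson

lemma rmodule_add_zero_left: "rmodule M \<Longrightarrow> x \<in> carrier M \<Longrightarrow> add M (zero M) x = x"
  unfolding rmodule_def by meson

lemma rmodule_add_zero_right: "rmodule M \<Longrightarrow> x \<in> carrier M \<Longrightarrow> add M x (zero M) = x"
  by (metis rmodule_add_commute rmodule_zero_closed rmodule_add_zero_left)

lemma rmodule_add_left_commute: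
  "rmodule M \<Longrightarrow> x \<in> carrier M \<Longrightarrow> y \<in> carrier M \<Longrightarrow> z \<in> carrier M \<Longrightarrow>
    add M x (add M y z) = add M y (add M x z)"
  by (metis rmodule_add_assoc rmodule_add_commute)

lemma rmodule_smul_add_left:
  "rmodule M \<Longrightarrow> x \<in> carrier M \<Longrightarrow> y \<in> carrier M \<Longrightarrow>
    smul M (add M x y) r = add M (smul M x r) (smul M y r)"
  unfolding rmodule_def by meson

lemma rmodule_smul_add_right:
  "rmodule M \<Longrightarrow> x \<in> carrier M \<Longrightarrow> smul M x (r + s) = add M (smul M x r) (smul M x s)"
  unfolding rmodule_def by meson

lemma rmodule_smul_mult:
  "rmodule M \<Longrightarrow> x \<in> carrier M \<Longrightarrow> smul M x (r * s) = smul M (smul M x r) s"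
  unfolding rmodule_def by meson

lemma rmodule_smul_one: "rmodule M \<Longrightarrow> x \<in> carrier M \<Longrightarrow> smul M x 1 = x"
  unfolding rmodule_def by meson

lemma rmodule_add_left_cancel:
  assumes M: "rmodule M" and C: "x \<in> carrier M" "y \<in> carrier M" "z \<in> carrier M"
    and eq: "add M x y = add M x z"
  shows "y = z"
proof -
  obtain w where w: "w \<in> carrier M" "add M x w = zero M"
    using M C(1) unfolding rmodule_def by meson
  have "add M w (add M x y) = add M w (add M x z)" using eq by simp
  then show ?thesis
    using M C w by (metis rmodule_add_assoc rmodule_add_commute rmodule_add_zero_left)
qed

lemma rmodule_smul_zero:
  assumes M: "rmodule M" and x: "x \<in> carrier M" shows "smul M x 0 = zero M"
proof -
  have "add M (smul M x 0) (smul M x 0) = add M (smul M x 0) (zero M)"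
    using M x by (metis add_0 rmodule_smul_add_right rmodule_smul_closed rmodule_add_zero_right)
  then show ?thesis
    using M x by (metis rmodule_add_left_cancel rmodule_smul_closed rmodule_zero_closed)
qed

lemma rmodule_zero_smul: assumes M: "rmodule M" shows "smul M (zero M) r = zero M"
proof -
  have "add M (smul M (zero M) r) (smul M (zero M) r) = add M (smul M (zero M) r) (zero M)"
    using M by (metis rmodule_smul_add_left rmodule_zero_closed rmodule_add_zero_left
        rmodule_smul_closed rmodule_add_zero_right)
  then show ?thesis
    using M by (metis rmodule_add_left_cancel rmodule_smul_closed rmodule_zero_closed)
qed

lemma rmodule_add_neg: "rmodule M \<Longrightarrow> x \<in> carrier M \<Longrightarrow> add M x (smul M x (-1)) = zero M"
  by (metis add.right_inverse rmodule_smul_add_right rmodule_smul_one rmodule_smul_zero)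

lemma rmodule_neg_add: "rmodule M \<Longrightarrow> x \<in> carrier M \<Longrightarrow> add M (smul M x (-1)) x = zero M"
  by (metis rmodule_add_neg rmodule_add_commute rmodule_smul_closed)

lemma rmodule_neg_add_cancel:
  "rmodule M \<Longrightarrow> x \<in> carrier M \<Longrightarrow> y \<in> carrier M \<Longrightarrow> add M (smul M x (-1)) (add M x y) = y"
  by (metis rmodule_add_assoc rmodule_neg_add rmodule_smul_closed rmodule_add_zero_left)

lemma rmodule_eq_if_diff_eq_zero:
  assumes M: "rmodule M" and C: "x \<in> carrier M" "y \<in> carrier M"
    and diff: "add M x (smul M y (-1)) = zero M"
  shows "x = y"
proof -
  have "add M x (add M (smul M y (-1)) y) = add M (zero M) y"
    using M C diff by (metis rmodule_add_assoc rmodule_smul_closed)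
  then show ?thesis
    using M C by (simp add: rmodule_neg_add rmodule_add_zero_right rmodule_add_zero_left)
qed

subsection \<open>Homomorphisms, submodules and kernels\<close>

lemma homD:
  assumes "f \<in> hom M N"
  shows "x \<in> carrier M \<Longrightarrow> f x \<in> carrier N"
    and "x \<in> carrier M \<Longrightarrow> y \<in> carrier M \<Longrightarrow> f (add M x y) = add N (f x) (f y)"
    and "x \<in> carrier M \<Longrightarrow> f (smul M x r) = smul N (f x) r"
  using assms unfolding hom_def by auto

lemma hom_zero:
  assumes M: "rmodule M" and N: "rmodule N" and f: "f \<in> hom M N"
  shows "f (zero M) = zero N"
proof -
  have z: "zero M \<in> carrier M" "f (zero M) \<in> carrier N"
    using M f by (auto simp: rmodule_zero_closed homD)
  have "add N (f (zero M)) (f (zero M)) = f (add M (zero M) (zero M))"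
    using homD(2)[OF f z(1) z(1)] by simp
  also have "\<dots> = add N (f (zero M)) (zero N)"
    using M N z by (simp add: rmodule_add_zero_left rmodule_add_zero_right)
  finally show ?thesis
    using rmodule_add_left_cancel[OF N z(2) z(2) rmodule_zero_closed[OF N]] by simp
qed

lemma hom_comp: "f \<in> hom M N \<Longrightarrow> g \<in> hom N P \<Longrightarrow> g \<circ> f \<in> hom M P"
  unfolding hom_def by auto

lemma hom_add:
  assumes K: "rmodule K" and f: "f \<in> hom X K" and g: "g \<in> hom X K"
  shows "(\<lambda>x. add K (f x) (g x)) \<in> hom X K"
  unfolding hom_def
proof (intro CollectI conjI ballI allI)
  fix x y assume x: "x \<in> carrier X" and y: "y \<in> carrier X"
  have C: "f x \<in> carrier K" "f y \<in> carrier K" "g x \<in> carrier K" "g y \<in> carrier K"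
    using homD(1)[OF f] homD(1)[OF g] x y by auto
  then show "add K (f (add X x y)) (g (add X x y)) = add K (add K (f x) (g x)) (add K (f y) (g y))"
    using homD(2)[OF f x y] homD(2)[OF g x y]
    by (simp add: rmodule_add_assoc[OF K] rmodule_add_closed[OF K]
        rmodule_add_left_commute[OF K, of "g x" "f y"])
qed (use homD[OF f] homD[OF g] rmodule_add_closed[OF K] rmodule_smul_add_left[OF K] in auto)

lemma hom_neg:
  assumes K: "rmodule K" and g: "g \<in> hom X K"
  shows "(\<lambda>x. smul K (g x) (-1)) \<in> hom X K"
  unfolding hom_def
proof (intro CollectI conjI ballI allI)
  fix x r assume x: "x \<in> carrier X"
  have gx: "g x \<in> carrier K" using homD(1)[OF g x] .
  have "smul K (smul K (g x) r) (-1) = smul K (g x) (r * -1)"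
    by (rule rmodule_smul_mult[OF K gx, symmetric])
  also have "\<dots> = smul K (g x) (-1 * r)" by simp
  also have "\<dots> = smul K (smul K (g x) (-1)) r"
    by (rule rmodule_smul_mult[OF K gx])
  finally show "smul K (g (smul X x r)) (-1) = smul K (smul K (g x) (-1)) r"
    using homD(3)[OF g x] by simp
qed (use homD[OF g] rmodule_smul_closed[OF K] rmodule_smul_add_left[OF K] in auto)

lemma subm_simps [simp]:
  "carrier (subm M S) = S" "add (subm M S) = add M" "zero (subm M S) = zero M"
  "smul (subm M S) = smul M"
  by (simp_all add: subm_def)

lemma hom_subm_iff: "f \<in> hom X (subm K A) \<longleftrightarrow> f \<in> hom X K \<and> f ` carrier X \<subseteq> A"
  if "A \<subseteq> carrier K"
  using that unfolding hom_def by auto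

lemma submoduleD:
  assumes "submodule M S"
  shows "S \<subseteq> carrier M" "zero M \<in> S" "x \<in> S \<Longrightarrow> y \<in> S \<Longrightarrow> add M x y \<in> S"
    "x \<in> S \<Longrightarrow> smul M x r \<in> S"
  using assms unfolding submodule_def by auto

lemma submodule_kernel:
  assumes M: "rmodule M" and N: "rmodule N" and f: "f \<in> hom M N"
  shows "submodule M (kernel M N f)"
  using hom_zero[OF M N f] rmodule_zero_closed[OF M] homD[OF f]
    rmodule_add_closed[OF M] rmodule_smul_closed[OF M]
    rmodule_add_zero_left[OF N] rmodule_zero_closed[OF N] rmodule_zero_smul[OF N]
  unfolding submodule_def kernel_def by auto

lemma submodule_image:
  assumes X: "rmodule X" and Y: "rmodule Y" and f: "f \<in> hom X Y" and T: "submodule X T"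
  shows "submodule Y (f ` T)"
  unfolding submodule_def
proof (intro conjI ballI allI)
  show "f ` T \<subseteq> carrier Y" using submoduleD(1)[OF T] homD(1)[OF f] by auto
  show "zero Y \<in> f ` T" using hom_zero[OF X Y f, symmetric] submoduleD(2)[OF T] by auto
next
  fix x y assume "x \<in> f ` T" "y \<in> f ` T"
  then obtain u v where uv: "u \<in> T" "v \<in> T" and xy: "x = f u" "y = f v" by auto
  have "add Y x y = f (add X u v)" using xy homD(2)[OF f] uv submoduleD(1)[OF T] by (simp add: subset_iff)
  then show "add Y x y \<in> f ` T" using submoduleD(3)[OF T uv] by simp
next
  fix x r assume "x \<in> f ` T"
  then obtain u where u: "u \<in> T" and xu: "x = f u" by auto
  have "smul Y x r = f (smul X u r)" using xu homD(3)[OF f] u submoduleD(1)[OF T] by (simp add: subset_iff)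
  then show "smul Y x r \<in> f ` T" using submoduleD(4)[OF T u] by simp
qed

subsection \<open>Direct summands\<close>

lemma rmodule_add_neg_cancel_right:
  "rmodule M \<Longrightarrow> x \<in> carrier M \<Longrightarrow> y \<in> carrier M \<Longrightarrow> add M (add M x y) (smul M y (-1)) = x"
  by (metis rmodule_add_assoc rmodule_add_neg rmodule_smul_closed rmodule_add_zero_right)

lemma direct_sum_decomposition_unique:
  assumes M: "rmodule M" and S: "submodule M S" and T: "submodule M T"
    and ST: "S \<inter> T = {zero M}"
    and s: "s \<in> S" "s' \<in> S" and t: "t \<in> T" "t' \<in> T" and eq: "add M s t = add M s' t'"
  shows "s = s'" and "t = t'"
proof -
  have C: "s \<in> carrier M" "s' \<in> carrier M" "t \<in> carrier M" "t' \<in> carrier M"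
    using s t submoduleD(1)[OF S] submoduleD(1)[OF T] by auto
  define w where "w = add M t' (smul M t (-1))"
  have wC: "w \<in> carrier M"
    unfolding w_def using C by (simp add: rmodule_add_closed[OF M] rmodule_smul_closed[OF M])
  have "s = add M (add M s' t') (smul M t (-1))"
    using rmodule_add_neg_cancel_right[OF M C(1,3)] eq by simp
  also have "\<dots> = add M s' w"
    unfolding w_def using C by (simp add: rmodule_add_assoc[OF M] rmodule_smul_closed[OF M])
  finally have s_eq: "s = add M s' w" .
  have "w = add M (smul M s' (-1)) s"
    using s_eq rmodule_neg_add_cancel[OF M C(2) wC] by simp
  also have "\<dots> = add M s (smul M s' (-1))"
    using C by (simp add: rmodule_add_commute[OF M] rmodule_smul_closed[OF M])
  finally have "w \<in> S" using s by (simp add: submoduleD(3,4)[OF S])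
  moreover have "w \<in> T" unfolding w_def using t by (intro submoduleD(3,4)[OF T])
  ultimately have "w = zero M" using ST by auto
  then show "s = s'" using s_eq C rmodule_add_zero_right[OF M] by simp
  then show "t = t'" using eq C rmodule_add_left_cancel[OF M] by blast
qed

lemma direct_summand_projection:
  assumes X: "rmodule X" and ds: "direct_summand X S"
  shows "\<exists>p\<in>hom X (subm X S). p ` carrier X = S"
proof -
  obtain T where S: "submodule X S" and T: "submodule X T" and ST: "S \<inter> T = {zero X}"
    and sp: "\<forall>x\<in>carrier X. \<exists>s\<in>S. \<exists>t\<in>T. x = add X s t"
    using ds unfolding direct_summand_def by blast
  note SC = submoduleD(1)[OF S] and TC = submoduleD(1)[OF T]
  define p where "p x = (SOME s. s \<in> S \<and> (\<exists>t\<in>T. x = add X s t))" for x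
  have p: "p x \<in> S \<and> (\<exists>t\<in>T. x = add X (p x) t)" if "x \<in> carrier X" for x
    unfolding p_def by (rule someI_ex) (use sp that in blast)
  have p_eq: "p (add X s t) = s" if st: "s \<in> S" "t \<in> T" for s t
  proof -
    have "add X s t \<in> carrier X" using st SC TC rmodule_add_closed[OF X] by auto
    then obtain t' where "p (add X s t) \<in> S" "t' \<in> T" "add X (p (add X s t)) t' = add X s t"
      using p by metis
    then show ?thesis using direct_sum_decomposition_unique(1)[OF X S T ST _ st(1) _ st(2)] by blast
  qed
  have p_hom: "p \<in> hom X (subm X S)" unfolding hom_def
  proof (intro CollectI conjI ballI allI)
    fix x y assume x: "x \<in> carrier X" and y: "y \<in> carrier X"
    obtain t u where tu: "t \<in> T" "u \<in> T" and xy: "x = add X (p x) t" "y = add X (p y) u"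
      using p[OF x] p[OF y] by blast
    have pxy: "p x \<in> S" "p y \<in> S" using p x y by auto
    have C: "p x \<in> carrier X" "p y \<in> carrier X" "t \<in> carrier X" "u \<in> carrier X"
      using pxy tu SC TC by auto
    have "add X (add X (p x) t) (add X (p y) u) = add X (add X (p x) (p y)) (add X t u)"
      using C by (simp add: rmodule_add_assoc[OF X] rmodule_add_closed[OF X]
          rmodule_add_left_commute[OF X, of t "p y"])
    then have "add X x y = add X (add X (p x) (p y)) (add X t u)"
      by (simp only: xy[symmetric])
    then show "p (add X x y) = add (subm X S) (p x) (p y)"
      using p_eq submoduleD(3)[OF S pxy] submoduleD(3)[OF T tu] by simp
  next
    fix x r assume x: "x \<in> carrier X"
    obtain t where t: "t \<in> T" "x = add X (p x) t" using p[OF x] by blast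
    have px: "p x \<in> S" using p x by auto
    have "smul X x r = add X (smul X (p x) r) (smul X t r)"
      using t px SC TC rmodule_smul_add_left[OF X, of "p x" t r] by auto
    then show "p (smul X x r) = smul (subm X S) (p x) r"
      using p_eq submoduleD(4)[OF S px] submoduleD(4)[OF T t(1)] by simp
  qed (use p in simp)
  have "p s = s" if "s \<in> S" for s
    using p_eq[OF that submoduleD(2)[OF T]] that SC rmodule_add_zero_right[OF X] by auto
  then have "S \<subseteq> p ` carrier X" using SC by (metis image_eqI subsetI subsetD)
  moreover have "p ` carrier X \<subseteq> S" using p by auto
  ultimately show ?thesis using p_hom by blast
qed

lemma direct_summand_of_retraction_preimage:
  assumes X: "rmodule X" and Y: "rmodule Y" and r: "r \<in> hom X Y" and i: "i \<in> hom Y X"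
    and ri: "\<And>y. y \<in> carrier Y \<Longrightarrow> r (i y) = y" and S: "submodule Y S"
    and ds: "direct_summand X {x \<in> carrier X. r x \<in> S}"
  shows "direct_summand Y S"
proof -
  obtain T where T: "submodule X T" and ST: "{x \<in> carrier X. r x \<in> S} \<inter> T = {zero X}"
    and sp: "\<forall>x\<in>carrier X. \<exists>s\<in>{x \<in> carrier X. r x \<in> S}. \<exists>t\<in>T. x = add X s t"
    using ds unfolding direct_summand_def by blast
  have TC: "T \<subseteq> carrier X" using submoduleD(1)[OF T] .
  have "S \<inter> r ` T \<subseteq> {zero Y}"
  proof
    fix y assume "y \<in> S \<inter> r ` T"
    then obtain t where t: "t \<in> T" "y = r t" "r t \<in> S" by auto
    then have "t = zero X" using ST TC by auto
    then show "y \<in> {zero Y}" using t hom_zero[OF X Y r] by simp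
  qed
  moreover have "zero Y \<in> S \<inter> r ` T"
    using submoduleD(2)[OF S] submoduleD(2)[OF T] hom_zero[OF X Y r] by force
  moreover have "\<exists>s\<in>S. \<exists>t\<in>r ` T. y = add Y s t" if y: "y \<in> carrier Y" for y
  proof -
    obtain s t where s: "s \<in> carrier X" "r s \<in> S" and t: "t \<in> T" and e: "i y = add X s t"
      using sp homD(1)[OF i y] by blast
    have "y = add Y (r s) (r t)" using ri[OF y] e homD(2)[OF r s(1)] t TC by auto
    then show ?thesis using s t by blast
  qed
  ultimately show ?thesis
    unfolding direct_summand_def using S submodule_image[OF X Y r T] by blast
qed

lemma dpow_simps [simp]:
  "carrier (dpow M n) = {f. (\<forall>i<n. f i \<in> carrier M) \<and> (\<forall>i\<ge>n. f i = zero M)}"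
  "add (dpow M n) = (\<lambda>f g i. add M (f i) (g i))"
  "zero (dpow M n) = (\<lambda>i. zero M)"
  "smul (dpow M n) = (\<lambda>f r i. if i < n then smul M (f i) r else zero M)"
  by (simp_all add: dpow_def)

lemma dpow_carrier_coord:
  "rmodule M \<Longrightarrow> f \<in> carrier (dpow M n) \<Longrightarrow> f i \<in> carrier M"
  by (cases "i < n") (auto simp: rmodule_zero_closed)

lemma rmodule_dpow:
  assumes M: "rmodule M" shows "rmodule (dpow M n)"
proof -
  have zz: "add M (zero M) (zero M) = zero M"
    using rmodule_add_zero_left[OF M] rmodule_zero_closed[OF M] by simp
  note coord = dpow_carrier_coord[OF M]
  let ?C = "carrier (dpow M n)"
  have neg: "\<exists>y\<in>?C. add (dpow M n) x y = zero (dpow M n)" if x: "x \<in> ?C" for x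
  proof
    let ?y = "\<lambda>i. if i < n then smul M (x i) (-1) else zero M"
    show "?y \<in> ?C" using x rmodule_smul_closed[OF M] by simp
    show "add (dpow M n) x ?y = zero (dpow M n)"
    proof
      fix i show "add (dpow M n) x ?y i = zero (dpow M n) i"
        using x zz rmodule_add_neg[OF M coord[OF x, of i]] by auto
    qed
  qed
  show ?thesis
    unfolding rmodule_def
  proof (intro conjI ballI allI)
    fix x y z assume x: "x \<in> ?C" and y: "y \<in> ?C" and z: "z \<in> ?C"
    show "add (dpow M n) (add (dpow M n) x y) z = add (dpow M n) x (add (dpow M n) y z)"
      using coord[OF x] coord[OF y] coord[OF z] by (simp add: fun_eq_iff rmodule_add_assoc[OF M])
    show "add (dpow M n) x y = add (dpow M n) y x"
      using coord[OF x] coord[OF y] by (simp add: fun_eq_iff rmodule_add_commute[OF M])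
    show "add (dpow M n) x y \<in> ?C" using x y zz by (simp add: rmodule_add_closed[OF M])
  next
    fix x r s assume x: "x \<in> ?C"
    show "smul (dpow M n) x (r + s) = add (dpow M n) (smul (dpow M n) x r) (smul (dpow M n) x s)"
      using coord[OF x] zz by (simp add: fun_eq_iff rmodule_smul_add_right[OF M])
    show "smul (dpow M n) x (r * s) = smul (dpow M n) (smul (dpow M n) x r) s"
      using coord[OF x] by (simp add: fun_eq_iff rmodule_smul_mult[OF M])
    show "smul (dpow M n) x r \<in> ?C" using x by (simp add: rmodule_smul_closed[OF M])
  next
    fix x y r assume x: "x \<in> ?C" and y: "y \<in> ?C"
    show "smul (dpow M n) (add (dpow M n) x y) r
        = add (dpow M n) (smul (dpow M n) x r) (smul (dpow M n) y r)"
      using coord[OF x] coord[OF y] zz by (simp add: fun_eq_iff rmodule_smul_add_left[OF M])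
  next
    fix x assume x: "x \<in> ?C"
    show "add (dpow M n) (zero (dpow M n)) x = x"
      using coord[OF x] by (simp add: fun_eq_iff rmodule_add_zero_left[OF M])
    show "smul (dpow M n) x 1 = x"
      using x by (auto simp: fun_eq_iff rmodule_smul_one[OF M])
    show "\<exists>y\<in>?C. add (dpow M n) x y = zero (dpow M n)" using neg[OF x] .
  qed (simp add: rmodule_zero_closed[OF M])
qed

definition dpow_take :: "('m, 'r) rmod \<Rightarrow> nat \<Rightarrow> (nat \<Rightarrow> 'm) \<Rightarrow> nat \<Rightarrow> 'm" where
  "dpow_take M a f = (\<lambda>i. if i < a then f i else zero M)"

definition dpow_drop :: "('m, 'r) rmod \<Rightarrow> nat \<Rightarrow> nat \<Rightarrow> (nat \<Rightarrow> 'm) \<Rightarrow> nat \<Rightarrow> 'm" where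
  "dpow_drop M a b f = (\<lambda>i. if i < b then f (a + i) else zero M)"

definition dpow_shift :: "('m, 'r) rmod \<Rightarrow> nat \<Rightarrow> (nat \<Rightarrow> 'm) \<Rightarrow> nat \<Rightarrow> 'm" where
  "dpow_shift M a g = (\<lambda>i. if a \<le> i then g (i - a) else zero M)"

lemma dpow_take_hom:
  "rmodule M \<Longrightarrow> a \<le> k \<Longrightarrow> dpow_take M a \<in> hom (dpow M k) (dpow M a)"
  by (auto simp: hom_def dpow_take_def fun_eq_iff rmodule_zero_closed rmodule_add_zero_left)

lemma dpow_inclusion_hom:
  "rmodule M \<Longrightarrow> a \<le> k \<Longrightarrow> (\<lambda>x. x) \<in> hom (dpow M a) (dpow M k)"
  by (auto simp: hom_def fun_eq_iff rmodule_zero_smul; metis not_le rmodule_zero_closed)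

lemma dpow_drop_hom: "rmodule M \<Longrightarrow> dpow_drop M a b \<in> hom (dpow M (a + b)) (dpow M b)"
  by (auto simp: hom_def dpow_drop_def fun_eq_iff rmodule_zero_closed rmodule_add_zero_left)

lemma dpow_shift_hom: "rmodule M \<Longrightarrow> dpow_shift M a \<in> hom (dpow M b) (dpow M (a + b))"
  by (auto simp: hom_def dpow_shift_def fun_eq_iff rmodule_zero_closed rmodule_add_zero_left
      rmodule_zero_smul)

lemma rel_rickart_dpow_if_rickart:
  assumes M: "rmodule M" and R: "rickart (dpow M (m + n))"
  shows "rel_rickart (dpow M m) (dpow M n)"
  unfolding rel_rickart_def
proof
  fix \<rho> assume \<rho>: "\<rho> \<in> hom (dpow M m) (dpow M n)"
  let ?X = "dpow M (m + n)" and ?Y = "dpow M m" and ?Z = "dpow M n"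
  have X: "rmodule ?X" and Y: "rmodule ?Y" and Z: "rmodule ?Z"
    using rmodule_dpow[OF M] by auto
  have take: "dpow_take M m \<in> hom ?X ?Y" using dpow_take_hom[OF M] by simp
  define \<phi> where "\<phi> = dpow_shift M m \<circ> \<rho> \<circ> dpow_take M m"
  have "\<phi> \<in> hom ?X ?X"
    unfolding \<phi>_def by (rule hom_comp[OF take hom_comp[OF \<rho> dpow_shift_hom[OF M]]])
  then have ds: "direct_summand ?X (kernel ?X ?X \<phi>)" using R unfolding rickart_def by blast
  have shift_zero: "dpow_shift M m g = (\<lambda>i. zero M) \<longleftrightarrow> g = (\<lambda>i. zero M)" for g
    unfolding dpow_shift_def fun_eq_iff by (metis add_diff_cancel_left' le_add1)
  have "kernel ?X ?X \<phi> = {x \<in> carrier ?X. dpow_take M m x \<in> kernel ?Y ?Z \<rho>}"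
    using homD(1)[OF take] by (auto simp: kernel_def \<phi>_def shift_zero)
  with ds show "direct_summand ?Y (kernel ?Y ?Z \<rho>)"
    by (intro direct_summand_of_retraction_preimage[OF X Y take dpow_inclusion_hom[OF M]
          _ submodule_kernel[OF Y Z \<rho>]])
      (auto simp: dpow_take_def fun_eq_iff)
qed

subsection \<open>Intersections of finitely generated submodules\<close>

definition embeds :: "('k, 'r) rmod \<Rightarrow> ('n, 'r) rmod \<Rightarrow> bool" where
  "embeds K N \<longleftrightarrow> (\<exists>e\<in>hom K N. inj_on e (carrier K))"

lemma rel_rickart_embeds:
  assumes K: "rmodule K" and N: "rmodule N" and R: "rel_rickart X N" and "embeds K N"
  shows "rel_rickart X K"
  unfolding rel_rickart_def
proof
  obtain e where e: "e \<in> hom K N" and inj: "inj_on e (carrier K)"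
    using \<open>embeds K N\<close> unfolding embeds_def by blast
  fix \<rho> assume \<rho>: "\<rho> \<in> hom X K"
  have "e x = zero N \<longleftrightarrow> x = zero K" if "x \<in> carrier K" for x
    using that inj_onD[OF inj _ that rmodule_zero_closed[OF K]] hom_zero[OF K N e] by auto
  then have "kernel X N (e \<circ> \<rho>) = kernel X K \<rho>"
    using homD(1)[OF \<rho>] unfolding kernel_def by auto
  then show "direct_summand X (kernel X K \<rho>)"
    using R hom_comp[OF \<rho> e] unfolding rel_rickart_def by metis
qed

lemma embeds_dpow_if_in_add:
  assumes "in_add M K" obtains k where "k > 0" and "embeds K (dpow M k)"
proof -
  obtain k S e where "k > 0" and S: "direct_summand (dpow M k) S"
    and e: "e \<in> hom K (subm (dpow M k) S)" and "bij_betw e (carrier K) S"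
    using assms unfolding in_add_def isomorphic_def by auto
  moreover have "e \<in> hom K (dpow M k)"
    using S e hom_subm_iff unfolding direct_summand_def submodule_def by blast
  ultimately show thesis
    using that unfolding embeds_def bij_betw_def by blast
qed

lemma embeds_dpow_one:
  assumes M: "rmodule M" shows "embeds M (dpow M 1)"
proof -
  let ?\<iota> = "\<lambda>x i. if i = 0 then x else zero M"
  have "add M (zero M) (zero M) = zero M"
    using rmodule_add_zero_left[OF M] rmodule_zero_closed[OF M] by simp
  then have "?\<iota> \<in> hom M (dpow M 1)"
    by (auto simp: hom_def fun_eq_iff rmodule_add_closed[OF M] rmodule_smul_closed[OF M])
  moreover have "inj ?\<iota>" by (auto simp: inj_def fun_eq_iff)
  ultimately show ?thesis unfolding embeds_def by (auto intro: inj_on_subset)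
qed

lemma image_take_kernel_diff:
  assumes K: "rmodule K"
    and \<alpha>: "\<alpha> \<in> hom (dpow M a) K" and \<beta>: "\<beta> \<in> hom (dpow M b) K"
  defines "\<delta> \<equiv> \<lambda>x. add K (\<alpha> (dpow_take M a x)) (smul K (\<beta> (dpow_drop M a b x)) (-1))"
  shows "(\<alpha> \<circ> dpow_take M a) ` kernel (dpow M (a + b)) K \<delta>
      = \<alpha> ` carrier (dpow M a) \<inter> \<beta> ` carrier (dpow M b)"
proof (intro equalityI subsetI)
  fix y assume "y \<in> (\<alpha> \<circ> dpow_take M a) ` kernel (dpow M (a + b)) K \<delta>"
  then obtain x where x: "x \<in> carrier (dpow M (a + b))" and "\<delta> x = zero K"
    and y: "y = \<alpha> (dpow_take M a x)"
    unfolding kernel_def by auto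
  moreover have "dpow_take M a x \<in> carrier (dpow M a)" and "dpow_drop M a b x \<in> carrier (dpow M b)"
    using x by (auto simp: dpow_take_def dpow_drop_def)
  ultimately show "y \<in> \<alpha> ` carrier (dpow M a) \<inter> \<beta> ` carrier (dpow M b)"
    using rmodule_eq_if_diff_eq_zero[OF K] homD(1)[OF \<alpha>] homD(1)[OF \<beta>] unfolding \<delta>_def
    by (metis IntI image_eqI)
next
  fix y assume "y \<in> \<alpha> ` carrier (dpow M a) \<inter> \<beta> ` carrier (dpow M b)"
  then obtain u v where u: "u \<in> carrier (dpow M a)" and v: "v \<in> carrier (dpow M b)"
    and yu: "y = \<alpha> u" and yv: "y = \<beta> v"
    by blast
  define x where "x = (\<lambda>i. if i < a then u i else v (i - a))"
  have x: "x \<in> carrier (dpow M (a + b))" using u v unfolding x_def by auto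
  have take: "dpow_take M a x = u" using u unfolding x_def dpow_take_def by (auto simp: fun_eq_iff)
  have drop: "dpow_drop M a b x = v" using v unfolding x_def dpow_drop_def by (auto simp: fun_eq_iff)
  have "\<delta> x = zero K"
    unfolding \<delta>_def take drop yu[symmetric] yv[symmetric]
    using rmodule_add_neg[OF K] homD(1)[OF \<alpha> u] yu by simp
  then show "y \<in> (\<alpha> \<circ> dpow_take M a) ` kernel (dpow M (a + b)) K \<delta>"
    using x take yu unfolding kernel_def by force
qed

lemma fin_gen_Int_images:
  assumes M: "rmodule M" and K: "rmodule K" and R: "rel_rickart (dpow M (a + b)) K"
    and "a > 0" and \<alpha>: "\<alpha> \<in> hom (dpow M a) K" and \<beta>: "\<beta> \<in> hom (dpow M b) K"
  shows "fin_gen M (subm K (\<alpha> ` carrier (dpow M a) \<inter> \<beta> ` carrier (dpow M b)))"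
proof -
  let ?X = "dpow M (a + b)" and ?I = "\<alpha> ` carrier (dpow M a) \<inter> \<beta> ` carrier (dpow M b)"
  define \<delta> where "\<delta> x = add K (\<alpha> (dpow_take M a x)) (smul K (\<beta> (dpow_drop M a b x)) (-1))" for x
  have take: "\<alpha> \<circ> dpow_take M a \<in> hom ?X K"
    using hom_comp[OF dpow_take_hom[OF M] \<alpha>] by simp
  have "\<delta> \<in> hom ?X K"
    unfolding \<delta>_def using hom_add[OF K take hom_neg[OF K hom_comp[OF dpow_drop_hom[OF M] \<beta>]]]
    by (simp add: comp_def)
  then obtain p where p: "p \<in> hom ?X (subm ?X (kernel ?X K \<delta>))"
    and p_onto: "p ` carrier ?X = kernel ?X K \<delta>"
    using direct_summand_projection[OF rmodule_dpow[OF M]] R unfolding rel_rickart_def by blast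
  have onto: "(\<alpha> \<circ> dpow_take M a \<circ> p) ` carrier ?X = ?I"
    using image_take_kernel_diff[OF K \<alpha> \<beta>] p_onto unfolding \<delta>_def image_comp[symmetric] by simp
  have "p \<in> hom ?X ?X"
    using p hom_subm_iff[of "kernel ?X K \<delta>" ?X] unfolding kernel_def by blast
  moreover have "?I \<subseteq> carrier K" using homD(1)[OF \<alpha>] by auto
  ultimately have "\<alpha> \<circ> dpow_take M a \<circ> p \<in> hom ?X (subm K ?I)"
    using hom_comp[OF _ take] hom_subm_iff onto by (metis comp_assoc subset_refl)
  with \<open>a > 0\<close> onto show ?thesis
    unfolding fin_gen_def by (intro exI[of _ "a + b"]) (auto simp only: subm_simps)
qed

lemma fin_gen_Int:
  assumes M: "rmodule M" and K: "rmodule K" and R: "\<And>n. n > 0 \<Longrightarrow> rel_rickart (dpow M n) K"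
    and A: "submodule K A" and B: "submodule K B"
    and "fin_gen M (subm K A)" and "fin_gen M (subm K B)"
  shows "fin_gen M (subm K (A \<inter> B))"
proof -
  obtain a \<alpha> where "a > 0" and \<alpha>: "\<alpha> \<in> hom (dpow M a) K" and "\<alpha> ` carrier (dpow M a) = A"
    using \<open>fin_gen M (subm K A)\<close> hom_subm_iff[OF submoduleD(1)[OF A]] unfolding fin_gen_def by auto
  moreover obtain b \<beta> where \<beta>: "\<beta> \<in> hom (dpow M b) K" and "\<beta> ` carrier (dpow M b) = B"
    using \<open>fin_gen M (subm K B)\<close> hom_subm_iff[OF submoduleD(1)[OF B]] unfolding fin_gen_def by auto
  ultimately show ?thesis
    using fin_gen_Int_images[OF M K R \<open>a > 0\<close> \<alpha> \<beta>] by simp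
qed

theorem mainTheorem2:
  fixes M :: "('m, 'r::ring_1) rmod"
  assumes "rmodule M" and "finite_sigma_rickart M"
  shows "(\<forall>m n. m > 0 \<and> n > 0 \<longrightarrow> rel_rickart (dpow M m) (dpow M n))
       \<and> (\<forall>K :: ('k, 'r) rmod. rmodule K \<and> in_add M K \<longrightarrow>
            (\<forall>A B. submodule K A \<and> submodule K B \<and> fin_gen M (subm K A) \<and> fin_gen M (subm K B)
                   \<longrightarrow> fin_gen M (subm K (A \<inter> B))))
       \<and> (\<forall>A B. submodule M A \<and> submodule M B \<and> fin_gen M (subm M A) \<and> fin_gen M (subm M B)
                   \<longrightarrow> fin_gen M (subm M (A \<inter> B)))"
proof -
  note M = \<open>rmodule M\<close>
  have part_i: "rel_rickart (dpow M m) (dpow M n)" if "m > 0" "n > 0" for m n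
    using rel_rickart_dpow_if_rickart[OF M] \<open>finite_sigma_rickart M\<close> that
    unfolding finite_sigma_rickart_def by simp
  have rickart_embedded: "rel_rickart (dpow M n) K"
    if "rmodule K" "embeds K (dpow M k)" "k > 0" "n > 0" for n k and K :: "('a, 'r) rmod"
    using rel_rickart_embeds[OF that(1) rmodule_dpow[OF M] part_i that(2)] that(3,4) by simp
  have "fin_gen M (subm K (A \<inter> B))"
    if K: "rmodule K" and "in_add M K" and AB: "submodule K A" "submodule K B"
      "fin_gen M (subm K A)" "fin_gen M (subm K B)" for K :: "('k, 'r) rmod" and A B
  proof -
    obtain k where "k > 0" "embeds K (dpow M k)" using embeds_dpow_if_in_add \<open>in_add M K\<close> .
    then have "rel_rickart (dpow M n) K" if "n > 0" for n using rickart_embedded[OF K] that by blast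
    then show ?thesis using fin_gen_Int[OF M K _ AB] by blast
  qed
  moreover have "fin_gen M (subm M (A \<inter> B))"
    if "submodule M A" "submodule M B" "fin_gen M (subm M A)" "fin_gen M (subm M B)" for A B
    using fin_gen_Int[OF M M rickart_embedded[OF M embeds_dpow_one[OF M]] that] by simp
  ultimately show ?thesis using part_i by blast
qed

end
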